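(* Let $G$ be a finitely generated infinite group with finite generating set $S_G$ and let $H\ne\{1\}$ be a finite group; equip $H\wr G$ with the word metric with respect to $(H\setminus\{1\})\cup S_G$. Let $\gamma$ be the growth function of $G$ and $D^n_G$ an $n$-dimensional control function of $G$. Then for any $k\ge n$ there is a $k$-dimensional control function of $H\wr G$ which is weakly dominated by $t\mapsto (D^n_G(t)+t)\cdot\gamma(D^n_G(t)+t)$. Also, for any $k\ge n$, every $k$-dimensional control function of $H\wr G$ weakly dominates $\gamma$.
   Context: Wreath product: $H\wr G$ is the set of pairs $(f,g)$, $f:G\to H$ finitely supported, with $(f_1,g_1)(f_2,g_2)=(f_1\cdot(g_1f_2),g_1g_2)$ where $(gf)(\gamma)=f(g^{-1}\gamma)$; $g\in G$ is identified with $(1,g)$ and $a\in H$ with $(f_a,1)$. Growth function: $\gamma(r)=\#\{g\in G:|g|_{S_G}<r\}$. For a metric space $X$, $r>0$: $r$-components of $Y\subseteq X$ are classes of points joined by sequences in $Y$ with consecutive distances $<r$. An $m$-dimensional control function of $X$ is $D:\mathbb{R}_+\to\mathbb{R}_+\cup\{\infty\}$ such that for each $r>0$ there is a cover $\{X_0,\dots,X_m\}$ of $X$ such that every open ball $B(x,r)$ lies in some $X_i$ and every $r$-component of each $X_i$ has diameter at most $D(r)$. For functions $f,g$ on $\mathbb{R}_+$, $f$ weakly dominates $g$ if there are constants $\lambda\ge1$, $C\ge0$ with $g(t)\le\lambda f(\lambda t+C)+C$ for all $t\in\mathbb{R}_+$. *)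

theory Defs
  imports "HOL-Algebra.Algebra" "HOL-Library.Extended_Real"
begin

definition word_len :: "('a, 'b) monoid_scheme \<Rightarrow> 'a set \<Rightarrow> 'a \<Rightarrow> nat" where
  "word_len M S x = (LEAST n. \<exists>ws. length ws = n \<and> set ws \<subseteq> S \<union> (m_inv M ` S)
                        \<and> foldr (\<lambda>a b. a \<otimes>\<^bsub>M\<^esub> b) ws \<one>\<^bsub>M\<^esub> = x)"

definition word_dist :: "('a, 'b) monoid_scheme \<Rightarrow> 'a set \<Rightarrow> 'a \<Rightarrow> 'a \<Rightarrow> real" where
  "word_dist M S x y = real (word_len M S (inv\<^bsub>M\<^esub> x \<otimes>\<^bsub>M\<^esub> y))"

definition growth :: "('a, 'b) monoid_scheme \<Rightarrow> 'a set \<Rightarrow> real \<Rightarrow> nat" where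
  "growth G S r = card {g \<in> carrier G. real (word_len G S g) < r}"

definition open_ball_in :: "'a set \<Rightarrow> ('a \<Rightarrow> 'a \<Rightarrow> real) \<Rightarrow> 'a \<Rightarrow> real \<Rightarrow> 'a set" where
  "open_ball_in Sp d x r = {y \<in> Sp. d x y < r}"

definition same_r_component :: "'a set \<Rightarrow> ('a \<Rightarrow> 'a \<Rightarrow> real) \<Rightarrow> real \<Rightarrow> 'a \<Rightarrow> 'a \<Rightarrow> bool" where
  "same_r_component Y d r x y \<longleftrightarrow> x \<in> Y \<and> (\<lambda>a b. a \<in> Y \<and> b \<in> Y \<and> d a b < r)\<^sup>*\<^sup>* x y"

text \<open>m-dimensional control function D : R_+ \<rightarrow> R_+ \<union> {\<infinity>} of the metric space (Sp,d).
  "every r-component has diameter at most D(r)" is written out as: any two points of the same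
  r-component have distance at most D(r).\<close>
definition control_function ::
  "'a set \<Rightarrow> ('a \<Rightarrow> 'a \<Rightarrow> real) \<Rightarrow> nat \<Rightarrow> (real \<Rightarrow> ereal) \<Rightarrow> bool" where
  "control_function Sp d m D \<longleftrightarrow>
     (\<forall>t\<ge>0. 0 \<le> D t) \<and>
     (\<forall>r>0. \<exists>U :: nat \<Rightarrow> 'a set.
        (\<forall>i\<le>m. U i \<subseteq> Sp) \<and> Sp \<subseteq> (\<Union>i\<le>m. U i) \<and>
        (\<forall>x\<in>Sp. \<exists>i\<le>m. open_ball_in Sp d x r \<subseteq> U i) \<and>
        (\<forall>i\<le>m. \<forall>x y. same_r_component (U i) d r x y \<longrightarrow> ereal (d x y) \<le> D r))"

definition weakly_dominates :: "(real \<Rightarrow> ereal) \<Rightarrow> (real \<Rightarrow> ereal) \<Rightarrow> bool" where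
  "weakly_dominates f g \<longleftrightarrow>
     (\<exists>lam C. lam \<ge> 1 \<and> C \<ge> 0 \<and>
        (\<forall>t\<ge>0. g t \<le> ereal lam * f (lam * t + C) + ereal C))"

definition wr_carrier :: "('h, 'c) monoid_scheme \<Rightarrow> ('g, 'd) monoid_scheme \<Rightarrow> (('g \<Rightarrow> 'h) \<times> 'g) set" where
  "wr_carrier H G = {(f, g). f ` carrier G \<subseteq> carrier H \<and> (\<forall>x. x \<notin> carrier G \<longrightarrow> f x = \<one>\<^bsub>H\<^esub>)
                         \<and> finite {x \<in> carrier G. f x \<noteq> \<one>\<^bsub>H\<^esub>} \<and> g \<in> carrier G}"

text \<open>(f1,g1)(f2,g2) = (f1 \<cdot> (g1 f2), g1 g2) with (g f)(x) = f(g^{-1} x).\<close>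
definition wr_mult :: "('h, 'c) monoid_scheme \<Rightarrow> ('g, 'd) monoid_scheme
     \<Rightarrow> ('g \<Rightarrow> 'h) \<times> 'g \<Rightarrow> ('g \<Rightarrow> 'h) \<times> 'g \<Rightarrow> ('g \<Rightarrow> 'h) \<times> 'g" where
  "wr_mult H G p q =
     ((\<lambda>x. if x \<in> carrier G then fst p x \<otimes>\<^bsub>H\<^esub> fst q (inv\<^bsub>G\<^esub> (snd p) \<otimes>\<^bsub>G\<^esub> x) else \<one>\<^bsub>H\<^esub>),
      snd p \<otimes>\<^bsub>G\<^esub> snd q)"

definition wreath :: "('h, 'c) monoid_scheme \<Rightarrow> ('g, 'd) monoid_scheme
                        \<Rightarrow> (('g \<Rightarrow> 'h) \<times> 'g) monoid" where
  "wreath H G = \<lparr>carrier = wr_carrier H G, monoid.mult = wr_mult H G, one = ((\<lambda>x. \<one>\<^bsub>H\<^esub>), \<one>\<^bsub>G\<^esub>)\<rparr>"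

definition wr_base :: "('h, 'c) monoid_scheme \<Rightarrow> ('g, 'd) monoid_scheme \<Rightarrow> 'h \<Rightarrow> ('g \<Rightarrow> 'h) \<times> 'g" where
  "wr_base H G a = ((\<lambda>x. if x = \<one>\<^bsub>G\<^esub> then a else \<one>\<^bsub>H\<^esub>), \<one>\<^bsub>G\<^esub>)"

definition wr_top :: "('h, 'c) monoid_scheme \<Rightarrow> 'g \<Rightarrow> ('g \<Rightarrow> 'h) \<times> 'g" where
  "wr_top H g = ((\<lambda>x. \<one>\<^bsub>H\<^esub>), g)"

definition wreath_gens :: "('h, 'c) monoid_scheme \<Rightarrow> ('g, 'd) monoid_scheme \<Rightarrow> 'g set
                             \<Rightarrow> (('g \<Rightarrow> 'h) \<times> 'g) set" where
  "wreath_gens H G S = wr_base H G ` (carrier H - {\<one>\<^bsub>H\<^esub>}) \<union> wr_top H ` S"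

end

theory Submission
  imports Defs
begin

(* The metric of W = H wr G is governed by the lamplighter estimate: the distance from x
   to y is at least the distance of their cursors in G, at least the number of lamps on
   which they differ, and exceeds the distance from the cursor of x to each such lamp;
   conversely it is at most d(g, g') plus the sum of 2 d(g, p) + 1 over the differing
   lamps p (walk to each lamp, switch it, walk back).

   Upper bound: pull a cover of G at scale R = 3 r + 1 back along the cursor projection.
   Along an r-chain in a preimage the cursor moves along an R-chain of G, so it stays in
   one R-component, of diameter at most Delta = D(R), and every changed lamp lies within r
   of it.  So all changed lamps lie in a ball of radius Delta + R, and the chain has
   diameter at most 3 (Delta + R) gamma(Delta + R).

   Lower bound: the configurations lit on subsets of the ball B of radius t form a cube
   Pow B inside W, in which flipping one lamp costs less than 2 t + 1 and distances are
   at least the sizes of symmetric differences.  Given a cover by k + 1 sets at scale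
   r = (k + 2)(t + 1), double counting the pairs (P, j) such that j does not separate P
   from a fixed representative of its component gives |B| <= (k + 2) D(r). *)

section \<open>Word length in a group\<close>

abbreviation letters :: "('a, 'b) monoid_scheme \<Rightarrow> 'a set \<Rightarrow> 'a set" where
  "letters M S \<equiv> S \<union> m_inv M ` S"

primrec word_prod :: "('a, 'b) monoid_scheme \<Rightarrow> 'a list \<Rightarrow> 'a" where
  "word_prod M [] = \<one>\<^bsub>M\<^esub>"
| "word_prod M (a # ws) = a \<otimes>\<^bsub>M\<^esub> word_prod M ws"

lemma word_prod_eq_foldr: "word_prod M ws = foldr (\<lambda>a b. a \<otimes>\<^bsub>M\<^esub> b) ws \<one>\<^bsub>M\<^esub>"
  by (induction ws) simp_all

(* Unlike word_len, which is the LEAST of a possibly empty set, has_word is meaningful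
   also for elements outside the subgroup generated by S. *)
definition has_word :: "('a, 'b) monoid_scheme \<Rightarrow> 'a set \<Rightarrow> nat \<Rightarrow> 'a \<Rightarrow> bool" where
  "has_word M S n x \<longleftrightarrow> (\<exists>ws. length ws \<le> n \<and> set ws \<subseteq> letters M S \<and> word_prod M ws = x)"

locale group_gens = group M for M (structure) +
  fixes S assumes gens_closed: "S \<subseteq> carrier M"
begin

lemma letters_closed: "letters M S \<subseteq> carrier M"
  using gens_closed by auto

lemma inv_letter: "s \<in> letters M S \<Longrightarrow> inv s \<in> letters M S"
  using gens_closed by auto

lemma word_prod_closed: "set ws \<subseteq> carrier M \<Longrightarrow> word_prod M ws \<in> carrier M"
  by (induction ws) auto

lemma word_prod_append:
  "set xs \<subseteq> carrier M \<Longrightarrow> set ys \<subseteq> carrier M \<Longrightarrow>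
    word_prod M (xs @ ys) = word_prod M xs \<otimes> word_prod M ys"
  by (induction xs) (auto simp: m_assoc word_prod_closed)

lemma word_prod_rev_inv:
  "set ws \<subseteq> carrier M \<Longrightarrow> word_prod M (rev (map (m_inv M) ws)) = inv (word_prod M ws)"
proof (induction ws)
  case (Cons a ws)
  then have "set (rev (map (m_inv M) ws)) \<subseteq> carrier M" by auto
  with Cons have "word_prod M (rev (map (m_inv M) (a # ws))) = inv (word_prod M ws) \<otimes> inv a"
    by (simp add: word_prod_append)
  with Cons.prems show ?case by (simp add: inv_mult_group word_prod_closed)
qed simp

lemma has_wordE:
  assumes "has_word M S n x"
  obtains ws where "length ws \<le> n" "set ws \<subseteq> letters M S" "word_prod M ws = x"
  using assms unfolding has_word_def by blast

lemma has_wordI: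
  "length ws \<le> n \<Longrightarrow> set ws \<subseteq> letters M S \<Longrightarrow> has_word M S n (word_prod M ws)"
  unfolding has_word_def by blast

lemma has_word_mono: "has_word M S n x \<Longrightarrow> n \<le> m \<Longrightarrow> has_word M S m x"
  unfolding has_word_def using order_trans by blast

lemma has_word_one: "has_word M S 0 \<one>"
  using has_wordI[of "[]"] by simp

lemma has_word_letter: "s \<in> letters M S \<Longrightarrow> has_word M S 1 s"
  using has_wordI[of "[s]"] letters_closed by auto

lemma has_word_mult: "has_word M S a x \<Longrightarrow> has_word M S b y \<Longrightarrow> has_word M S (a + b) (x \<otimes> y)"
proof -
  assume "has_word M S a x" "has_word M S b y"
  then obtain xs ys where xs: "length xs \<le> a" "set xs \<subseteq> letters M S" "word_prod M xs = x"
    and ys: "length ys \<le> b" "set ys \<subseteq> letters M S" "word_prod M ys = y"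
    by (elim has_wordE)
  have "has_word M S (a + b) (word_prod M (xs @ ys))"
    by (rule has_wordI) (use xs ys in auto)
  moreover have "set xs \<subseteq> carrier M" "set ys \<subseteq> carrier M"
    using xs(2) ys(2) letters_closed by blast+
  ultimately show ?thesis
    using xs(3) ys(3) by (simp add: word_prod_append)
qed

lemma has_word_inv: "has_word M S n x \<Longrightarrow> has_word M S n (inv x)"
proof -
  assume "has_word M S n x"
  then obtain ws where ws: "length ws \<le> n" "set ws \<subseteq> letters M S" "word_prod M ws = x"
    by (elim has_wordE)
  have "has_word M S n (word_prod M (rev (map (m_inv M) ws)))"
    by (rule has_wordI) (use ws inv_letter in auto)
  moreover have "set ws \<subseteq> carrier M"
    using ws(2) letters_closed by blast
  ultimately show ?thesis
    using ws(3) by (simp add: word_prod_rev_inv)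
qed

lemma word_len_le:
  assumes "has_word M S n x" shows "word_len M S x \<le> n"
proof -
  from assms obtain ws where ws: "length ws \<le> n" "set ws \<subseteq> letters M S" "word_prod M ws = x"
    by (elim has_wordE)
  have "word_len M S x \<le> length ws"
    unfolding word_len_def by (rule Least_le, rule exI[of _ ws]) (use ws in \<open>simp add: word_prod_eq_foldr\<close>)
  with ws(1) show ?thesis by simp
qed

lemma has_word_word_len: "has_word M S n x \<Longrightarrow> has_word M S (word_len M S x) x"
proof -
  assume "has_word M S n x"
  then have "\<exists>m ws. length ws = m \<and> set ws \<subseteq> letters M S \<and> word_prod M ws = x"
    unfolding has_word_def by blast
  then have "\<exists>ws. length ws = word_len M S x \<and> set ws \<subseteq> letters M S \<and> word_prod M ws = x"
    unfolding word_len_def word_prod_eq_foldr by (rule LeastI_ex)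
  then show ?thesis unfolding has_word_def by (metis order_refl)
qed

lemma word_len_one: "word_len M S \<one> = 0"
  using word_len_le[OF has_word_one] by simp

lemma generate_has_word: "x \<in> generate M S \<Longrightarrow> \<exists>n. has_word M S n x"
proof (induction rule: generate.induct)
  case one then show ?case using has_word_one by blast
next
  case (incl h) then show ?case using has_word_letter by blast
next
  case (inv h) then show ?case using has_word_letter by blast
next
  case (eng h1 h2) then show ?case using has_word_mult by blast
qed

lemma has_word_generate:
  assumes "has_word M S n x" shows "x \<in> generate M S"
proof -
  have word_in: "word_prod M ws \<in> generate M S" if "set ws \<subseteq> letters M S" for ws
    using that
  proof (induction ws)
    case Nil then show ?case by (simp add: generate.one)
  next
    case (Cons a ws)
    then have "a \<in> generate M S" by (auto intro: generate.incl generate.inv)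
    with Cons show ?case by (simp add: generate.eng)
  qed
  from assms obtain ws where "set ws \<subseteq> letters M S" "word_prod M ws = x"
    by (elim has_wordE)
  with word_in show ?thesis by blast
qed

lemma finite_has_word:
  assumes "finite S" shows "finite {x. has_word M S n x}"
proof -
  have "finite (word_prod M ` {ws. set ws \<subseteq> letters M S \<and> length ws \<le> n})"
    using assms by (intro finite_imageI finite_lists_length_le) simp
  moreover have "{x. has_word M S n x} \<subseteq> word_prod M ` {ws. set ws \<subseteq> letters M S \<and> length ws \<le> n}"
  proof
    fix x assume "x \<in> {x. has_word M S n x}"
    then obtain ws where "length ws \<le> n" "set ws \<subseteq> letters M S" "word_prod M ws = x"
      by (auto elim: has_wordE)
    then show "x \<in> word_prod M ` {ws. set ws \<subseteq> letters M S \<and> length ws \<le> n}" by blast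
  qed
  ultimately show ?thesis by (rule finite_subset[rotated])
qed

lemma word_dist_self: "x \<in> carrier M \<Longrightarrow> word_dist M S x x = 0"
  by (simp add: word_dist_def word_len_one)

end

locale generated_group = group_gens +
  assumes generate_eq: "generate M S = carrier M"
begin

lemma has_word_word_len_carrier: "x \<in> carrier M \<Longrightarrow> has_word M S (word_len M S x) x"
  using generate_has_word has_word_word_len generate_eq by blast

lemma has_word_iff: "x \<in> carrier M \<Longrightarrow> has_word M S n x \<longleftrightarrow> word_len M S x \<le> n"
  using word_len_le has_word_mono has_word_word_len_carrier by blast

lemma word_len_mult_le:
  "x \<in> carrier M \<Longrightarrow> y \<in> carrier M \<Longrightarrow> word_len M S (x \<otimes> y) \<le> word_len M S x + word_len M S y"
  by (meson has_word_mult has_word_word_len_carrier word_len_le)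

lemma word_len_inv: "x \<in> carrier M \<Longrightarrow> word_len M S (inv x) = word_len M S x"
  by (metis le_antisym has_word_inv has_word_word_len_carrier inv_closed inv_inv word_len_le)

lemma word_len_letter: "s \<in> letters M S \<Longrightarrow> word_len M S s \<le> 1"
  by (rule word_len_le[OF has_word_letter])

lemma word_dist_commute:
  assumes "x \<in> carrier M" "y \<in> carrier M"
  shows "word_dist M S x y = word_dist M S y x"
proof -
  have "inv y \<otimes> x = inv (inv x \<otimes> y)"
    using assms by (simp add: inv_mult_group)
  then show ?thesis
    using assms by (simp add: word_dist_def word_len_inv)
qed

lemma word_dist_triangle:
  assumes "x \<in> carrier M" "y \<in> carrier M" "z \<in> carrier M"
  shows "word_dist M S x z \<le> word_dist M S x y + word_dist M S y z"
proof -
  have "y \<otimes> (inv y \<otimes> z) = z"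
    using assms by (simp add: m_assoc[symmetric])
  then have "inv x \<otimes> z = (inv x \<otimes> y) \<otimes> (inv y \<otimes> z)"
    using assms by (simp add: m_assoc)
  then show ?thesis
    using assms word_len_mult_le[of "inv x \<otimes> y" "inv y \<otimes> z"] by (simp add: word_dist_def)
qed

lemma bij_betw_word_dist_ball:
  assumes "g \<in> carrier M"
  shows "bij_betw (\<lambda>p. inv g \<otimes> p) {p \<in> carrier M. word_dist M S g p < t}
           {x \<in> carrier M. real (word_len M S x) < t}"
proof (rule bij_betw_byWitness[where f' = "\<lambda>x. g \<otimes> x"])
  show "\<forall>p\<in>{p \<in> carrier M. word_dist M S g p < t}. g \<otimes> (inv g \<otimes> p) = p"
    using assms by (simp add: m_assoc[symmetric])
  show "\<forall>x\<in>{x \<in> carrier M. real (word_len M S x) < t}. inv g \<otimes> (g \<otimes> x) = x"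
    using assms by (simp add: m_assoc[symmetric])
  show "(\<lambda>p. inv g \<otimes> p) ` {p \<in> carrier M. word_dist M S g p < t}
          \<subseteq> {x \<in> carrier M. real (word_len M S x) < t}"
    using assms by (auto simp: word_dist_def)
  show "(\<lambda>x. g \<otimes> x) ` {x \<in> carrier M. real (word_len M S x) < t}
          \<subseteq> {p \<in> carrier M. word_dist M S g p < t}"
    using assms by (auto simp: word_dist_def m_assoc[symmetric])
qed

lemma finite_word_ball:
  assumes "finite S"
  shows "finite {x \<in> carrier M. real (word_len M S x) < t}"
proof (rule finite_subset[OF _ finite_has_word[OF assms, of "nat \<lceil>t\<rceil>"]])
  show "{x \<in> carrier M. real (word_len M S x) < t} \<subseteq> {x. has_word M S (nat \<lceil>t\<rceil>) x}"
  proof safe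
    fix x assume x: "x \<in> carrier M" "real (word_len M S x) < t"
    then have "real (word_len M S x) \<le> real (nat \<lceil>t\<rceil>)"
      using real_nat_ceiling_ge[of t] by linarith
    with x show "has_word M S (nat \<lceil>t\<rceil>) x"
      by (simp add: has_word_iff)
  qed
qed

lemma growth_ge_one:
  assumes "finite S" "0 < t"
  shows "1 \<le> growth M S t"
proof -
  have "\<one> \<in> {x \<in> carrier M. real (word_len M S x) < t}"
    using assms(2) by (simp add: word_len_one)
  then show ?thesis
    unfolding growth_def using finite_word_ball[OF assms(1)]
    by (metis One_nat_def Suc_leI card_gt_0_iff empty_iff)
qed

end

section \<open>Components and control functions\<close>

lemma same_r_componentI:
  "x \<in> Y \<Longrightarrow> y \<in> Y \<Longrightarrow> d x y < r \<Longrightarrow> same_r_component Y d r x y"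
  unfolding same_r_component_def by (simp add: r_into_rtranclp)

lemma same_r_component_refl: "x \<in> Y \<Longrightarrow> same_r_component Y d r x x"
  unfolding same_r_component_def by simp

lemma same_r_component_trans:
  "same_r_component Y d r x y \<Longrightarrow> same_r_component Y d r y z \<Longrightarrow> same_r_component Y d r x z"
  unfolding same_r_component_def by (meson rtranclp_trans)

lemma same_r_component_mem:
  assumes "same_r_component Y d r x y"
  shows "x \<in> Y" "y \<in> Y"
proof -
  have "(\<lambda>a b. a \<in> Y \<and> b \<in> Y \<and> d a b < r)\<^sup>*\<^sup>* x y" "x \<in> Y"
    using assms unfolding same_r_component_def by auto
  then show "x \<in> Y" "y \<in> Y"
    by (induction rule: rtranclp_induct) auto
qed

lemma same_r_component_step:
  "same_r_component Y d r x y \<Longrightarrow> z \<in> Y \<Longrightarrow> d y z < r \<Longrightarrow> same_r_component Y d r x z"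
  using same_r_component_mem(2) same_r_component_trans same_r_componentI by metis

lemma same_r_component_sym:
  assumes "same_r_component Y d r x y" and "\<And>a b. a \<in> Y \<Longrightarrow> b \<in> Y \<Longrightarrow> d a b = d b a"
  shows "same_r_component Y d r y x"
proof -
  have "(\<lambda>a b. a \<in> Y \<and> b \<in> Y \<and> d a b < r)\<^sup>*\<^sup>* x y"
    using assms(1) unfolding same_r_component_def by simp
  then have "(\<lambda>a b. a \<in> Y \<and> b \<in> Y \<and> d a b < r)\<^sup>*\<^sup>* y x"
  proof (induction rule: rtranclp_induct)
    case (step b c)
    then show ?case using assms(2) by (metis (mono_tags, lifting) converse_rtranclp_into_rtranclp)
  qed simp
  then show ?thesis
    using same_r_component_mem(2)[OF assms(1)] unfolding same_r_component_def by simp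
qed

lemma same_r_component_cong:
  assumes "same_r_component Y d r x y" and "\<And>a b. a \<in> Y \<Longrightarrow> b \<in> Y \<Longrightarrow> d a b = d b a"
  shows "same_r_component Y d r x = same_r_component Y d r y"
proof -
  have "same_r_component Y d r y x"
    using assms by (rule same_r_component_sym)
  then show ?thesis
    using assms(1) by (intro ext) (meson same_r_component_trans)
qed

lemma control_function_nonneg: "control_function Sp d m D \<Longrightarrow> 0 \<le> t \<Longrightarrow> 0 \<le> D t"
  unfolding control_function_def by blast

lemma control_functionE:
  assumes "control_function Sp d m D" "0 < r"
  obtains U where "\<forall>i\<le>m. U i \<subseteq> Sp"
    "\<forall>x\<in>Sp. \<exists>i\<le>m. open_ball_in Sp d x r \<subseteq> U i"
    "\<forall>i\<le>m. \<forall>x y. same_r_component (U i) d r x y \<longrightarrow> ereal (d x y) \<le> D r"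
  using assms(1)[unfolded control_function_def, THEN conjunct2, THEN spec[of _ r], THEN mp, OF assms(2)]
  by (elim exE conjE) (rule that; assumption)

lemma control_functionI:
  assumes nonneg: "\<And>t. 0 \<le> t \<Longrightarrow> 0 \<le> D t"
    and self: "\<And>x. x \<in> Sp \<Longrightarrow> d x x = 0"
    and cover: "\<And>r. 0 < r \<Longrightarrow> \<exists>U. (\<forall>i\<le>m. U i \<subseteq> Sp)
        \<and> (\<forall>x\<in>Sp. \<exists>i\<le>m. open_ball_in Sp d x r \<subseteq> U i)
        \<and> (\<forall>i\<le>m. \<forall>x y. same_r_component (U i) d r x y \<longrightarrow> ereal (d x y) \<le> D r)"
  shows "control_function Sp d m D"
  unfolding control_function_def
proof (intro conjI allI impI)
  fix r :: real assume r: "0 < r"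
  obtain U where U: "\<forall>i\<le>m. U i \<subseteq> Sp" "\<forall>x\<in>Sp. \<exists>i\<le>m. open_ball_in Sp d x r \<subseteq> U i"
      "\<forall>i\<le>m. \<forall>x y. same_r_component (U i) d r x y \<longrightarrow> ereal (d x y) \<le> D r"
    using cover[OF r] by (elim exE conjE) (rule that; assumption)
  have "Sp \<subseteq> (\<Union>i\<le>m. U i)"
  proof
    fix x assume x: "x \<in> Sp"
    then obtain i where "i \<le> m" "open_ball_in Sp d x r \<subseteq> U i" using U(2) by blast
    moreover have "x \<in> open_ball_in Sp d x r" using x r self by (simp add: open_ball_in_def)
    ultimately show "x \<in> (\<Union>i\<le>m. U i)" by blast
  qed
  with U show "\<exists>U. (\<forall>i\<le>m. U i \<subseteq> Sp) \<and> Sp \<subseteq> (\<Union>i\<le>m. U i)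
      \<and> (\<forall>x\<in>Sp. \<exists>i\<le>m. open_ball_in Sp d x r \<subseteq> U i)
      \<and> (\<forall>i\<le>m. \<forall>x y. same_r_component (U i) d r x y \<longrightarrow> ereal (d x y) \<le> D r)"
    by (intro exI[of _ U] conjI)
qed (rule nonneg)

lemma weakly_dominates_rescale:
  assumes "1 \<le> lam" "0 \<le> C"
  shows "weakly_dominates f (\<lambda>t. ereal lam * f (lam * t + C))"
  unfolding weakly_dominates_def using assms
  by (intro exI[of _ lam] exI[of _ C]) (simp add: ereal_le_add_self)

section \<open>The wreath product\<close>

definition lamps :: "('h, 'c) monoid_scheme \<Rightarrow> ('g, 'd) monoid_scheme \<Rightarrow> ('g \<Rightarrow> 'h) \<times> 'g \<Rightarrow> 'g set" where
  "lamps H G p = {z \<in> carrier G. fst p z \<noteq> \<one>\<^bsub>H\<^esub>}"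

definition lamp_diff :: "('h, 'c) monoid_scheme \<Rightarrow> ('g, 'd) monoid_scheme
    \<Rightarrow> ('g \<Rightarrow> 'h) \<times> 'g \<Rightarrow> ('g \<Rightarrow> 'h) \<times> 'g \<Rightarrow> 'g set" where
  "lamp_diff H G p q = {z \<in> carrier G. fst p z \<noteq> fst q z}"

locale wreath_groups = G: group G + H: group H
  for G :: "('g, 'd) monoid_scheme" and H :: "('h, 'c) monoid_scheme"
begin

abbreviation W :: "(('g \<Rightarrow> 'h) \<times> 'g) monoid" where
  "W \<equiv> wreath H G"

lemma carrier_wreath_iff:
  "(f, g) \<in> carrier W \<longleftrightarrow>
     (\<forall>x\<in>carrier G. f x \<in> carrier H) \<and> (\<forall>x. x \<notin> carrier G \<longrightarrow> f x = \<one>\<^bsub>H\<^esub>)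
     \<and> finite (lamps H G (f, g)) \<and> g \<in> carrier G"
  by (auto simp: wreath_def wr_carrier_def lamps_def)

lemma mult_wreath:
  "(f1, g1) \<otimes>\<^bsub>W\<^esub> (f2, g2) =
     ((\<lambda>x. if x \<in> carrier G then f1 x \<otimes>\<^bsub>H\<^esub> f2 (inv\<^bsub>G\<^esub> g1 \<otimes>\<^bsub>G\<^esub> x) else \<one>\<^bsub>H\<^esub>), g1 \<otimes>\<^bsub>G\<^esub> g2)"
  unfolding wreath_def wr_mult_def monoid.select_convs fst_conv snd_conv by (rule refl)

lemma one_wreath: "\<one>\<^bsub>W\<^esub> = ((\<lambda>x. \<one>\<^bsub>H\<^esub>), \<one>\<^bsub>G\<^esub>)"
  by (simp add: wreath_def)

lemma wreath_fst_closed: "p \<in> carrier W \<Longrightarrow> fst p x \<in> carrier H"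
  by (cases p; cases "x \<in> carrier G") (auto simp: carrier_wreath_iff)

lemma wreath_fst_outside: "p \<in> carrier W \<Longrightarrow> x \<notin> carrier G \<Longrightarrow> fst p x = \<one>\<^bsub>H\<^esub>"
  by (cases p) (auto simp: carrier_wreath_iff)

lemma wreath_snd_closed: "p \<in> carrier W \<Longrightarrow> snd p \<in> carrier G"
  by (cases p) (auto simp: carrier_wreath_iff)

lemma finite_lamps: "p \<in> carrier W \<Longrightarrow> finite (lamps H G p)"
  by (cases p) (auto simp: carrier_wreath_iff)

lemma snd_mult_wreath: "snd (p \<otimes>\<^bsub>W\<^esub> q) = snd p \<otimes>\<^bsub>G\<^esub> snd q"
  by (cases p, cases q) (simp add: mult_wreath)

lemma lamps_mult_subset:
  assumes "p \<in> carrier W" "q \<in> carrier W"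
  shows "lamps H G (p \<otimes>\<^bsub>W\<^esub> q) \<subseteq> lamps H G p \<union> (\<lambda>y. snd p \<otimes>\<^bsub>G\<^esub> y) ` lamps H G q"
proof
  obtain f1 g1 f2 g2 where pq: "p = (f1, g1)" "q = (f2, g2)" by fastforce
  have g1: "g1 \<in> carrier G" using wreath_snd_closed[OF assms(1)] pq by simp
  have f2: "f2 y \<in> carrier H" for y using wreath_fst_closed[OF assms(2)] pq by simp
  fix x assume "x \<in> lamps H G (p \<otimes>\<^bsub>W\<^esub> q)"
  then have x: "x \<in> carrier G" and ne: "f1 x \<otimes>\<^bsub>H\<^esub> f2 (inv\<^bsub>G\<^esub> g1 \<otimes>\<^bsub>G\<^esub> x) \<noteq> \<one>\<^bsub>H\<^esub>"
    by (auto simp: lamps_def pq mult_wreath)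
  show "x \<in> lamps H G p \<union> (\<lambda>y. snd p \<otimes>\<^bsub>G\<^esub> y) ` lamps H G q"
  proof (cases "f1 x = \<one>\<^bsub>H\<^esub>")
    case True
    then have "inv\<^bsub>G\<^esub> g1 \<otimes>\<^bsub>G\<^esub> x \<in> lamps H G q"
      using ne x g1 f2 by (simp add: lamps_def pq)
    moreover have "x = g1 \<otimes>\<^bsub>G\<^esub> (inv\<^bsub>G\<^esub> g1 \<otimes>\<^bsub>G\<^esub> x)"
      using x g1 by (simp add: G.m_assoc[symmetric])
    ultimately show ?thesis
      using pq by (metis UnI2 image_eqI snd_conv)
  next
    case False
    with x show ?thesis by (simp add: lamps_def pq)
  qed
qed

lemma mult_wreath_closed:
  assumes "p \<in> carrier W" "q \<in> carrier W"
  shows "p \<otimes>\<^bsub>W\<^esub> q \<in> carrier W"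
proof -
  obtain f1 g1 f2 g2 where pq: "p = (f1, g1)" "q = (f2, g2)" by fastforce
  have "finite (lamps H G (p \<otimes>\<^bsub>W\<^esub> q))"
    using lamps_mult_subset[OF assms] finite_lamps[OF assms(1)] finite_lamps[OF assms(2)]
    by (meson finite_Un finite_imageI finite_subset)
  moreover have "f1 x \<in> carrier H" "f2 x \<in> carrier H" for x
    using wreath_fst_closed[OF assms(1)] wreath_fst_closed[OF assms(2)] pq by simp_all
  ultimately show ?thesis
    using wreath_snd_closed[OF assms(1)] wreath_snd_closed[OF assms(2)]
    by (simp add: pq mult_wreath carrier_wreath_iff)
qed

lemma mult_wreath_assoc:
  assumes "p \<in> carrier W" "q \<in> carrier W" "r \<in> carrier W"
  shows "(p \<otimes>\<^bsub>W\<^esub> q) \<otimes>\<^bsub>W\<^esub> r = p \<otimes>\<^bsub>W\<^esub> (q \<otimes>\<^bsub>W\<^esub> r)"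
proof -
  obtain f1 g1 f2 g2 f3 g3 where pqr: "p = (f1, g1)" "q = (f2, g2)" "r = (f3, g3)"
    by (metis surj_pair)
  have g: "g1 \<in> carrier G" "g2 \<in> carrier G" "g3 \<in> carrier G"
    using assms pqr wreath_snd_closed by (metis snd_conv)+
  have f: "f1 x \<in> carrier H" "f2 x \<in> carrier H" "f3 x \<in> carrier H" for x
    using assms pqr wreath_fst_closed by (metis fst_conv)+
  have "inv\<^bsub>G\<^esub> (g1 \<otimes>\<^bsub>G\<^esub> g2) \<otimes>\<^bsub>G\<^esub> x = inv\<^bsub>G\<^esub> g2 \<otimes>\<^bsub>G\<^esub> (inv\<^bsub>G\<^esub> g1 \<otimes>\<^bsub>G\<^esub> x)"
    if "x \<in> carrier G" for x
    using g that by (simp add: G.inv_mult_group G.m_assoc)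
  with g f show ?thesis
    by (auto simp: pqr mult_wreath H.m_assoc G.m_assoc intro!: ext)
qed

lemma inv_wreath_witness:
  assumes "p \<in> carrier W"
  defines "p' \<equiv> ((\<lambda>x. if x \<in> carrier G then inv\<^bsub>H\<^esub> fst p (snd p \<otimes>\<^bsub>G\<^esub> x) else \<one>\<^bsub>H\<^esub>), inv\<^bsub>G\<^esub> snd p)"
  shows "p' \<in> carrier W" and "p' \<otimes>\<^bsub>W\<^esub> p = \<one>\<^bsub>W\<^esub>"
proof -
  have g: "snd p \<in> carrier G" using wreath_snd_closed[OF assms(1)] .
  have f: "fst p x \<in> carrier H" for x using wreath_fst_closed[OF assms(1)] .
  have "lamps H G p' \<subseteq> (\<lambda>y. inv\<^bsub>G\<^esub> snd p \<otimes>\<^bsub>G\<^esub> y) ` lamps H G p"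
  proof
    fix x assume "x \<in> lamps H G p'"
    then have x: "x \<in> carrier G" and "snd p \<otimes>\<^bsub>G\<^esub> x \<in> lamps H G p"
      using g f by (auto simp: lamps_def p'_def)
    moreover have "x = inv\<^bsub>G\<^esub> snd p \<otimes>\<^bsub>G\<^esub> (snd p \<otimes>\<^bsub>G\<^esub> x)"
      using x g by (simp add: G.m_assoc[symmetric])
    ultimately show "x \<in> (\<lambda>y. inv\<^bsub>G\<^esub> snd p \<otimes>\<^bsub>G\<^esub> y) ` lamps H G p" by blast
  qed
  then have "finite (lamps H G p')"
    using finite_lamps[OF assms(1)] by (meson finite_imageI finite_subset)
  then show "p' \<in> carrier W"
    using g f unfolding p'_def by (simp add: carrier_wreath_iff)
  show "p' \<otimes>\<^bsub>W\<^esub> p = \<one>\<^bsub>W\<^esub>"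
    using g f by (cases p) (auto simp: p'_def mult_wreath one_wreath G.m_assoc[symmetric] intro!: ext)
qed

lemma group_wreath: "group W"
proof (rule groupI)
  show "\<one>\<^bsub>W\<^esub> \<in> carrier W"
    by (simp add: one_wreath carrier_wreath_iff lamps_def)
next
  fix p assume p: "p \<in> carrier W"
  show "\<one>\<^bsub>W\<^esub> \<otimes>\<^bsub>W\<^esub> p = p"
    using wreath_fst_closed[OF p] wreath_fst_outside[OF p] wreath_snd_closed[OF p]
    by (cases p) (auto simp: one_wreath mult_wreath intro!: ext)
  show "\<exists>p'\<in>carrier W. p' \<otimes>\<^bsub>W\<^esub> p = \<one>\<^bsub>W\<^esub>"
    using inv_wreath_witness[OF p] by blast
qed (simp_all add: mult_wreath_closed mult_wreath_assoc)

sublocale W: group W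
  by (rule group_wreath)

lemma inv_mult_wreath:
  assumes "p \<in> carrier W" "q \<in> carrier W"
  shows "inv\<^bsub>W\<^esub> p \<otimes>\<^bsub>W\<^esub> q =
    ((\<lambda>z. if z \<in> carrier G then inv\<^bsub>H\<^esub> fst p (snd p \<otimes>\<^bsub>G\<^esub> z) \<otimes>\<^bsub>H\<^esub> fst q (snd p \<otimes>\<^bsub>G\<^esub> z) else \<one>\<^bsub>H\<^esub>),
     inv\<^bsub>G\<^esub> snd p \<otimes>\<^bsub>G\<^esub> snd q)"
proof -
  have "inv\<^bsub>W\<^esub> p = ((\<lambda>x. if x \<in> carrier G then inv\<^bsub>H\<^esub> fst p (snd p \<otimes>\<^bsub>G\<^esub> x) else \<one>\<^bsub>H\<^esub>), inv\<^bsub>G\<^esub> snd p)"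
    using inv_wreath_witness[OF assms(1)] assms(1) by (intro W.inv_equality) simp_all
  then show ?thesis
    using wreath_snd_closed[OF assms(1)] by (cases q) (auto simp: mult_wreath G.m_assoc[symmetric] intro!: ext)
qed

lemma lamps_inv_mult:
  assumes "p \<in> carrier W" "q \<in> carrier W"
  shows "lamps H G (inv\<^bsub>W\<^esub> p \<otimes>\<^bsub>W\<^esub> q) = (\<lambda>z. inv\<^bsub>G\<^esub> snd p \<otimes>\<^bsub>G\<^esub> z) ` lamp_diff H G p q"
proof -
  have g: "snd p \<in> carrier G" using wreath_snd_closed[OF assms(1)] .
  have differ: "inv\<^bsub>H\<^esub> fst p x \<otimes>\<^bsub>H\<^esub> fst q x \<noteq> \<one>\<^bsub>H\<^esub> \<longleftrightarrow> fst p x \<noteq> fst q x" for x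
    using wreath_fst_closed[OF assms(1)] wreath_fst_closed[OF assms(2)]
    by (metis H.inv_solve_left' H.one_closed H.r_one)
  have "z \<in> lamps H G (inv\<^bsub>W\<^esub> p \<otimes>\<^bsub>W\<^esub> q) \<longleftrightarrow> z \<in> carrier G \<and> snd p \<otimes>\<^bsub>G\<^esub> z \<in> lamp_diff H G p q"
    for z using g by (auto simp: lamps_def lamp_diff_def inv_mult_wreath[OF assms] differ)
  moreover have "z \<in> carrier G \<and> snd p \<otimes>\<^bsub>G\<^esub> z \<in> lamp_diff H G p q
      \<longleftrightarrow> z \<in> (\<lambda>z. inv\<^bsub>G\<^esub> snd p \<otimes>\<^bsub>G\<^esub> z) ` lamp_diff H G p q" for z
  proof
    assume "z \<in> carrier G \<and> snd p \<otimes>\<^bsub>G\<^esub> z \<in> lamp_diff H G p q"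
    moreover have "z = inv\<^bsub>G\<^esub> snd p \<otimes>\<^bsub>G\<^esub> (snd p \<otimes>\<^bsub>G\<^esub> z)" if "z \<in> carrier G"
      using g that by (simp add: G.m_assoc[symmetric])
    ultimately show "z \<in> (\<lambda>z. inv\<^bsub>G\<^esub> snd p \<otimes>\<^bsub>G\<^esub> z) ` lamp_diff H G p q" by blast
  next
    assume "z \<in> (\<lambda>z. inv\<^bsub>G\<^esub> snd p \<otimes>\<^bsub>G\<^esub> z) ` lamp_diff H G p q"
    then show "z \<in> carrier G \<and> snd p \<otimes>\<^bsub>G\<^esub> z \<in> lamp_diff H G p q"
      using g by (auto simp: lamp_diff_def G.m_assoc[symmetric])
  qed
  ultimately show ?thesis by blast
qed

end

section \<open>Word length in the wreath product\<close>

definition single_lamp :: "('h, 'c) monoid_scheme \<Rightarrow> ('g, 'd) monoid_scheme \<Rightarrow> 'g \<Rightarrow> 'h \<Rightarrow> ('g \<Rightarrow> 'h) \<times> 'g" where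
  "single_lamp H G a c = ((\<lambda>x. if x = a then c else \<one>\<^bsub>H\<^esub>), \<one>\<^bsub>G\<^esub>)"

locale wreath_word = wreath_groups G H + GS: generated_group G S
  for G :: "('g, 'd) monoid_scheme" and H :: "('h, 'c) monoid_scheme" and S +
  assumes finite_gens: "finite S"
begin

abbreviation gw :: "(('g \<Rightarrow> 'h) \<times> 'g) set" where
  "gw \<equiv> wreath_gens H G S"

lemma lamps_wr_top: "lamps H G (wr_top H g) = {}"
  by (simp add: lamps_def wr_top_def)

lemma lamps_wr_base: "lamps H G (wr_base H G c) \<subseteq> {\<one>\<^bsub>G\<^esub>}"
  by (auto simp: lamps_def wr_base_def)

lemma wr_top_closed: "g \<in> carrier G \<Longrightarrow> wr_top H g \<in> carrier W"
  by (simp add: wr_top_def carrier_wreath_iff lamps_def)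

lemma wr_base_closed: "c \<in> carrier H \<Longrightarrow> wr_base H G c \<in> carrier W"
  using finite_subset[OF lamps_wr_base] by (simp add: wr_base_def carrier_wreath_iff)

lemma wr_top_mult: "g1 \<in> carrier G \<Longrightarrow> g2 \<in> carrier G \<Longrightarrow>
    wr_top H g1 \<otimes>\<^bsub>W\<^esub> wr_top H g2 = wr_top H (g1 \<otimes>\<^bsub>G\<^esub> g2)"
  by (auto simp: wr_top_def mult_wreath intro!: ext)

lemma wr_top_one: "wr_top H \<one>\<^bsub>G\<^esub> = \<one>\<^bsub>W\<^esub>"
  by (simp add: wr_top_def one_wreath)

lemma wr_top_inv: "g \<in> carrier G \<Longrightarrow> inv\<^bsub>W\<^esub> wr_top H g = wr_top H (inv\<^bsub>G\<^esub> g)"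
  by (rule W.inv_equality) (simp_all add: wr_top_mult wr_top_one wr_top_closed)

lemma wr_base_mult: "c \<in> carrier H \<Longrightarrow> d \<in> carrier H \<Longrightarrow>
    wr_base H G c \<otimes>\<^bsub>W\<^esub> wr_base H G d = wr_base H G (c \<otimes>\<^bsub>H\<^esub> d)"
  by (auto simp: wr_base_def mult_wreath intro!: ext)

lemma wr_base_one: "wr_base H G \<one>\<^bsub>H\<^esub> = \<one>\<^bsub>W\<^esub>"
  by (auto simp: wr_base_def one_wreath)

lemma wr_base_inv: "c \<in> carrier H \<Longrightarrow> inv\<^bsub>W\<^esub> wr_base H G c = wr_base H G (inv\<^bsub>H\<^esub> c)"
  by (rule W.inv_equality) (simp_all add: wr_base_mult wr_base_closed wr_base_one)

lemma wreath_gens_closed: "gw \<subseteq> carrier W"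
  using GS.gens_closed wr_top_closed wr_base_closed by (auto simp: wreath_gens_def)

sublocale WS: group_gens W gw
  by unfold_locales (rule wreath_gens_closed)

lemma wreath_letter_cases:
  assumes "e \<in> letters W gw"
  obtains (base) c where "c \<in> carrier H" "e = wr_base H G c"
    | (top) s where "s \<in> letters G S" "e = wr_top H s"
proof -
  obtain g where g: "g \<in> gw" "e = g \<or> e = inv\<^bsub>W\<^esub> g"
    using assms by blast
  from g(1) consider c where "c \<in> carrier H" "g = wr_base H G c" | s where "s \<in> S" "g = wr_top H s"
    unfolding wreath_gens_def by blast
  then show ?thesis
  proof cases
    case (1 c)
    then show ?thesis using g(2) base wr_base_inv by (metis H.inv_closed)
  next
    case (2 s)
    then have "s \<in> carrier G" using GS.gens_closed by blast
    then show ?thesis using 2 g(2) top wr_top_inv by (metis UnI1 UnI2 image_eqI)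
  qed
qed

lemma wreath_letter_lamps:
  assumes "e \<in> letters W gw" shows "lamps H G e \<subseteq> {\<one>\<^bsub>G\<^esub>}"
  using assms by (cases rule: wreath_letter_cases) (simp_all add: lamps_wr_top lamps_wr_base)

lemma wreath_letter_snd:
  assumes "e \<in> letters W gw" shows "word_len G S (snd e) \<le> 1"
  using assms
proof (cases rule: wreath_letter_cases)
  case (base c)
  then show ?thesis by (simp add: wr_base_def GS.word_len_one)
next
  case (top s)
  then show ?thesis using GS.word_len_letter[of s] by (simp add: wr_top_def)
qed

lemma lamps_letter_mult:
  assumes "e \<in> letters W gw" "p \<in> carrier W"
  shows "lamps H G (e \<otimes>\<^bsub>W\<^esub> p) \<subseteq> insert \<one>\<^bsub>G\<^esub> ((\<lambda>y. snd e \<otimes>\<^bsub>G\<^esub> y) ` lamps H G p)"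
proof -
  have "e \<in> carrier W" using assms(1) WS.letters_closed by blast
  then show ?thesis
    using lamps_mult_subset[OF _ assms(2)] wreath_letter_lamps[OF assms(1)] by blast
qed

lemma word_prod_wreath_bounds:
  assumes "set ws \<subseteq> letters W gw"
  shows "word_len G S (snd (word_prod W ws)) \<le> length ws
       \<and> card (lamps H G (word_prod W ws)) \<le> length ws
       \<and> (\<forall>z \<in> lamps H G (word_prod W ws). word_len G S z < length ws)"
  using assms
proof (induction ws)
  case Nil
  then show ?case by (simp add: one_wreath lamps_def GS.word_len_one)
next
  case (Cons e ws)
  define p where "p = word_prod W ws"
  have e: "e \<in> letters W gw" using Cons.prems by simp
  then have e': "snd e \<in> carrier G" "word_len G S (snd e) \<le> 1"
    using WS.letters_closed wreath_snd_closed wreath_letter_snd by (blast, blast)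
  have p: "p \<in> carrier W"
    using Cons.prems WS.letters_closed WS.word_prod_closed unfolding p_def by (meson order_trans set_subset_Cons)
  have IH: "word_len G S (snd p) \<le> length ws" "card (lamps H G p) \<le> length ws"
      "\<And>z. z \<in> lamps H G p \<Longrightarrow> word_len G S z < length ws"
    using Cons unfolding p_def by auto
  note sub = lamps_letter_mult[OF e(1) p]
  have "word_len G S (snd (e \<otimes>\<^bsub>W\<^esub> p)) \<le> Suc (length ws)"
    using GS.word_len_mult_le[OF e'(1) wreath_snd_closed[OF p]] e'(2) IH(1) by (simp add: snd_mult_wreath)
  moreover have "card (lamps H G (e \<otimes>\<^bsub>W\<^esub> p)) \<le> Suc (length ws)"
  proof -
    have fin: "finite (lamps H G p)" using p by (rule finite_lamps)
    have "card (lamps H G (e \<otimes>\<^bsub>W\<^esub> p)) \<le> card (insert \<one>\<^bsub>G\<^esub> ((\<lambda>y. snd e \<otimes>\<^bsub>G\<^esub> y) ` lamps H G p))"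
      using fin by (intro card_mono[OF _ sub]) simp
    also have "\<dots> \<le> Suc (card ((\<lambda>y. snd e \<otimes>\<^bsub>G\<^esub> y) ` lamps H G p))"
      using fin by (simp add: card_insert_if)
    also have "\<dots> \<le> Suc (card (lamps H G p))"
      using card_image_le[OF fin] by simp
    finally show ?thesis using IH(2) by simp
  qed
  moreover have "word_len G S z < Suc (length ws)" if z: "z \<in> lamps H G (e \<otimes>\<^bsub>W\<^esub> p)" for z
  proof -
    consider "z = \<one>\<^bsub>G\<^esub>" | y where "y \<in> lamps H G p" "z = snd e \<otimes>\<^bsub>G\<^esub> y"
      using sub z by blast
    then show ?thesis
    proof cases
      case 2
      then have "word_len G S z \<le> word_len G S (snd e) + word_len G S y"
        using GS.word_len_mult_le e'(1) by (simp add: lamps_def)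
      then show ?thesis using 2 IH(3) e'(2) by fastforce
    qed (simp add: GS.word_len_one)
  qed
  ultimately show ?case by (simp add: p_def)
qed

lemma has_word_wreath_bounds:
  assumes "has_word W gw n w"
  shows "word_len G S (snd w) \<le> n" "card (lamps H G w) \<le> n"
    "\<And>z. z \<in> lamps H G w \<Longrightarrow> word_len G S z < n"
proof -
  obtain ws where "length ws \<le> n" "set ws \<subseteq> letters W gw" "word_prod W ws = w"
    using assms by (elim WS.has_wordE)
  with word_prod_wreath_bounds[of ws]
  show "word_len G S (snd w) \<le> n" "card (lamps H G w) \<le> n"
    "\<And>z. z \<in> lamps H G w \<Longrightarrow> word_len G S z < n"
    by auto
qed

lemma word_prod_wr_top: "set ws \<subseteq> carrier G \<Longrightarrow> word_prod W (map (wr_top H) ws) = wr_top H (word_prod G ws)"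
  by (induction ws) (simp_all add: wr_top_one wr_top_mult GS.word_prod_closed)

lemma has_word_wr_top: "has_word G S n g \<Longrightarrow> has_word W gw n (wr_top H g)"
proof -
  assume "has_word G S n g"
  then obtain ws where ws: "length ws \<le> n" "set ws \<subseteq> letters G S" "word_prod G ws = g"
    by (elim GS.has_wordE)
  have top_letter: "wr_top H s \<in> letters W gw" if "s \<in> letters G S" for s
    using that GS.gens_closed wr_top_inv[symmetric] unfolding wreath_gens_def by blast
  have "set (map (wr_top H) ws) \<subseteq> letters W gw"
    unfolding set_map by (rule image_subsetI) (meson subsetD ws(2) top_letter)
  then have "has_word W gw n (word_prod W (map (wr_top H) ws))"
    using ws(1) by (intro WS.has_wordI) simp_all
  then show ?thesis
    using ws GS.letters_closed word_prod_wr_top by (metis order_trans)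
qed

lemma has_word_wr_base: "c \<in> carrier H \<Longrightarrow> has_word W gw 1 (wr_base H G c)"
proof (cases "c = \<one>\<^bsub>H\<^esub>")
  case True
  then show ?thesis using wr_base_one WS.has_word_one WS.has_word_mono by fastforce
next
  case False
  assume "c \<in> carrier H"
  with False have "wr_base H G c \<in> gw" by (simp add: wreath_gens_def)
  then show ?thesis by (intro WS.has_word_letter) simp
qed

lemma single_lamp_eq:
  assumes "a \<in> carrier G" "c \<in> carrier H"
  shows "wr_top H a \<otimes>\<^bsub>W\<^esub> wr_base H G c \<otimes>\<^bsub>W\<^esub> wr_top H (inv\<^bsub>G\<^esub> a) = single_lamp H G a c"
proof -
  have "inv\<^bsub>G\<^esub> a \<otimes>\<^bsub>G\<^esub> x = \<one>\<^bsub>G\<^esub> \<longleftrightarrow> x = a" if "x \<in> carrier G" for x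
    using assms that by (metis G.inv_solve_left' G.one_closed G.r_one)
  then show ?thesis
    using assms by (auto simp: wr_top_def wr_base_def single_lamp_def mult_wreath intro!: ext)
qed

lemma has_word_single_lamp:
  assumes "a \<in> carrier G" "c \<in> carrier H"
  shows "has_word W gw (2 * word_len G S a + 1) (single_lamp H G a c)"
proof -
  have "has_word W gw (word_len G S a + 1 + word_len G S a)
      (wr_top H a \<otimes>\<^bsub>W\<^esub> wr_base H G c \<otimes>\<^bsub>W\<^esub> wr_top H (inv\<^bsub>G\<^esub> a))"
    using assms GS.has_word_word_len_carrier
    by (intro WS.has_word_mult has_word_wr_top has_word_wr_base GS.has_word_inv) simp_all
  then show ?thesis
    using single_lamp_eq[OF assms] by (simp add: mult_2)
qed

lemma has_word_lamp_config:
  assumes "finite A" "A \<subseteq> carrier G" "\<And>x. h x \<in> carrier H" "\<And>x. x \<notin> A \<Longrightarrow> h x = \<one>\<^bsub>H\<^esub>"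
  shows "has_word W gw (\<Sum>z\<in>A. 2 * word_len G S z + 1) (h, \<one>\<^bsub>G\<^esub>)"
  using assms
proof (induction A arbitrary: h rule: finite_induct)
  case empty
  then have "(h, \<one>\<^bsub>G\<^esub>) = \<one>\<^bsub>W\<^esub>" by (auto simp: one_wreath)
  then show ?case by (simp add: WS.has_word_one)
next
  case (insert a A)
  define h' where "h' = h(a := \<one>\<^bsub>H\<^esub>)"
  have "has_word W gw (\<Sum>z\<in>A. 2 * word_len G S z + 1) (h', \<one>\<^bsub>G\<^esub>)"
    using insert by (intro insert.IH) (auto simp: h'_def)
  moreover have "has_word W gw (2 * word_len G S a + 1) (single_lamp H G a (h a))"
    using insert.prems by (intro has_word_single_lamp) auto
  moreover have "h x = \<one>\<^bsub>H\<^esub>" if "x \<notin> carrier G" for x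
    using insert.prems(1,3) that by (metis subsetD)
  then have "(h', \<one>\<^bsub>G\<^esub>) \<otimes>\<^bsub>W\<^esub> single_lamp H G a (h a) = (h, \<one>\<^bsub>G\<^esub>)"
    using insert.prems by (auto simp: h'_def single_lamp_def mult_wreath intro!: ext)
  ultimately have "has_word W gw ((\<Sum>z\<in>A. 2 * word_len G S z + 1) + (2 * word_len G S a + 1)) (h, \<one>\<^bsub>G\<^esub>)"
    using WS.has_word_mult by metis
  then show ?case
    using insert.hyps by (simp add: add.commute)
qed

lemma has_word_wreath:
  assumes "w \<in> carrier W"
  shows "has_word W gw ((\<Sum>z\<in>lamps H G w. 2 * word_len G S z + 1) + word_len G S (snd w)) w"
proof -
  have "has_word W gw (\<Sum>z\<in>lamps H G w. 2 * word_len G S z + 1) (fst w, \<one>\<^bsub>G\<^esub>)"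
    using finite_lamps[OF assms] wreath_fst_closed[OF assms] wreath_fst_outside[OF assms]
    by (intro has_word_lamp_config) (auto simp: lamps_def)
  moreover have "has_word W gw (word_len G S (snd w)) (wr_top H (snd w))"
    using assms wreath_snd_closed GS.has_word_word_len_carrier has_word_wr_top by blast
  moreover have "(fst w, \<one>\<^bsub>G\<^esub>) \<otimes>\<^bsub>W\<^esub> wr_top H (snd w) = w"
    using wreath_fst_closed[OF assms] wreath_fst_outside[OF assms] wreath_snd_closed[OF assms]
    by (cases w) (auto simp: wr_top_def mult_wreath intro!: ext)
  ultimately show ?thesis
    using WS.has_word_mult by fastforce
qed

lemma generate_wreath: "generate W gw = carrier W"
  using has_word_wreath WS.has_word_generate W.generate_incl[OF wreath_gens_closed] by blast

sublocale WS: generated_group W gw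
  by unfold_locales (rule generate_wreath)

lemma inj_on_lamp_diff: "x \<in> carrier W \<Longrightarrow> inj_on (\<lambda>z. inv\<^bsub>G\<^esub> snd x \<otimes>\<^bsub>G\<^esub> z) (lamp_diff H G x y)"
  using wreath_snd_closed by (intro inj_onI) (simp add: lamp_diff_def)

lemma word_dist_wreath_ge:
  assumes "x \<in> carrier W" "y \<in> carrier W"
  shows "word_dist G S (snd x) (snd y) \<le> word_dist W gw x y"
    and "real (card (lamp_diff H G x y)) \<le> word_dist W gw x y"
    and "p \<in> lamp_diff H G x y \<Longrightarrow> word_dist G S (snd x) p < word_dist W gw x y"
proof -
  define w where "w = inv\<^bsub>W\<^esub> x \<otimes>\<^bsub>W\<^esub> y"
  have "w \<in> carrier W" using assms by (simp add: w_def)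
  note bounds = has_word_wreath_bounds[OF WS.has_word_word_len_carrier[OF this]]
  have snd_w: "snd w = inv\<^bsub>G\<^esub> snd x \<otimes>\<^bsub>G\<^esub> snd y"
    by (simp add: w_def inv_mult_wreath[OF assms])
  have lamps_w: "lamps H G w = (\<lambda>z. inv\<^bsub>G\<^esub> snd x \<otimes>\<^bsub>G\<^esub> z) ` lamp_diff H G x y"
    by (simp add: w_def lamps_inv_mult[OF assms])
  show "word_dist G S (snd x) (snd y) \<le> word_dist W gw x y"
    using bounds(1) unfolding word_dist_def w_def[symmetric] snd_w[symmetric] by simp
  show "real (card (lamp_diff H G x y)) \<le> word_dist W gw x y"
    using bounds(2) card_image[OF inj_on_lamp_diff[OF assms(1)]]
    unfolding word_dist_def w_def[symmetric] lamps_w by simp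
  assume "p \<in> lamp_diff H G x y"
  then show "word_dist G S (snd x) p < word_dist W gw x y"
    using bounds(3) unfolding word_dist_def w_def[symmetric] lamps_w by simp
qed

lemma word_dist_wreath_le:
  assumes "x \<in> carrier W" "y \<in> carrier W"
  shows "word_dist W gw x y
    \<le> (\<Sum>p\<in>lamp_diff H G x y. 2 * word_dist G S (snd x) p + 1) + word_dist G S (snd x) (snd y)"
proof -
  define w where "w = inv\<^bsub>W\<^esub> x \<otimes>\<^bsub>W\<^esub> y"
  have "w \<in> carrier W" using assms by (simp add: w_def)
  then have "word_len W gw w \<le> (\<Sum>z\<in>lamps H G w. 2 * word_len G S z + 1) + word_len G S (snd w)"
    by (rule WS.word_len_le[OF has_word_wreath])
  also have "(\<Sum>z\<in>lamps H G w. 2 * word_len G S z + 1)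
      = (\<Sum>p\<in>lamp_diff H G x y. 2 * word_len G S (inv\<^bsub>G\<^esub> snd x \<otimes>\<^bsub>G\<^esub> p) + 1)"
    by (simp add: w_def lamps_inv_mult[OF assms] sum.reindex[OF inj_on_lamp_diff[OF assms(1)]])
  finally have "real (word_len W gw w) \<le> real ((\<Sum>p\<in>lamp_diff H G x y.
      2 * word_len G S (inv\<^bsub>G\<^esub> snd x \<otimes>\<^bsub>G\<^esub> p) + 1) + word_len G S (snd w))"
    by (rule of_nat_mono)
  then show ?thesis
    unfolding word_dist_def w_def[symmetric] by (simp add: w_def inv_mult_wreath[OF assms] add.commute)
qed

end

section \<open>Hypercubes in the wreath product\<close>

lemma real_card_Sigma_le:
  assumes "finite A" "\<And>a. a \<in> A \<Longrightarrow> finite (F a)" "\<And>a. a \<in> A \<Longrightarrow> real (card (F a)) \<le> c"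
  shows "real (card (Sigma A F)) \<le> real (card A) * c"
proof -
  have "real (card (Sigma A F)) = (\<Sum>a\<in>A. real (card (F a)))"
    using assms(1,2) by (simp add: card_SigmaI)
  also have "\<dots> \<le> (\<Sum>a\<in>A. c)"
    using assms(3) by (rule sum_mono)
  finally show ?thesis by simp
qed

lemma real_card_Sigma_ge:
  assumes "finite A" "\<And>a. a \<in> A \<Longrightarrow> finite (F a)" "\<And>a. a \<in> A \<Longrightarrow> c \<le> real (card (F a))"
  shows "real (card A) * c \<le> real (card (Sigma A F))"
proof -
  have "real (card A) * c = (\<Sum>a\<in>A. c)" by simp
  also have "\<dots> \<le> (\<Sum>a\<in>A. real (card (F a)))"
    using assms(3) by (rule sum_mono)
  also have "\<dots> = real (card (Sigma A F))"
    using assms(1,2) by (simp add: card_SigmaI)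
  finally show ?thesis .
qed

lemma card_le_of_cube_retractions:
  fixes B :: "'a set" and col :: "'a set \<Rightarrow> nat" and \<rho> :: "nat \<Rightarrow> 'a set \<Rightarrow> 'a set"
  assumes B: "finite B"
    and col: "\<And>P. P \<subseteq> B \<Longrightarrow> col P \<le> k"
    and \<rho>_sub: "\<And>i Q. i \<le> k \<Longrightarrow> Q \<subseteq> B \<Longrightarrow> \<rho> i Q \<subseteq> B"
    and \<rho>_near: "\<And>i Q. i \<le> k \<Longrightarrow> Q \<subseteq> B \<Longrightarrow> real (card (sym_diff Q (\<rho> i Q))) \<le> \<Delta>"
    and \<rho>_flip: "\<And>P j. P \<subseteq> B \<Longrightarrow> j \<in> B \<Longrightarrow> \<rho> (col P) (sym_diff P {j}) = \<rho> (col P) P"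
  shows "real (card B) \<le> (real k + 2) * \<Delta>"
proof -
  have fin: "finite (sym_diff Q (\<rho> i Q))" if "i \<le> k" "Q \<subseteq> B" for i Q
    using \<rho>_sub[OF that] that B by (meson finite_Diff finite_Un finite_subset)
  (* Flipping j maps each pair (P, j) with j outside the at most Delta coordinates separating
     P from its retraction injectively to a triple (Q, col P, j) in which j separates Q from
     its retraction. *)
  define N where "N = (SIGMA P:Pow B. B - sym_diff P (\<rho> (col P) P))"
  define T where "T = (SIGMA Q:Pow B. SIGMA i:{..k}. sym_diff Q (\<rho> i Q))"
  have "real (card (Pow B)) * (real (card B) - \<Delta>) \<le> real (card N)"
    unfolding N_def
  proof (rule real_card_Sigma_ge)
    fix P assume "P \<in> Pow B"
    define Dif where "Dif = sym_diff P (\<rho> (col P) P)"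
    have "Dif \<subseteq> B" "real (card Dif) \<le> \<Delta>"
      using \<open>P \<in> Pow B\<close> col \<rho>_sub[of "col P" P] \<rho>_near[of "col P" P] unfolding Dif_def by auto
    moreover from this have "card (B - Dif) = card B - card Dif" "card Dif \<le> card B"
      using B by (simp_all add: card_Diff_subset finite_subset card_mono)
    ultimately show "real (card B) - \<Delta> \<le> real (card (B - sym_diff P (\<rho> (col P) P)))"
      unfolding Dif_def[symmetric] by (simp add: of_nat_diff)
  qed (use B in simp_all)
  also have "card N \<le> card T"
  proof (rule card_inj_on_le)
    have flip_flip: "sym_diff (sym_diff P {j}) {j} = P" for P :: "'a set" and j by auto
    show "inj_on (\<lambda>(P, j). (sym_diff P {j}, col P, j)) N"
      by (rule inj_onI) (clarsimp, metis flip_flip)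
    show "(\<lambda>(P, j). (sym_diff P {j}, col P, j)) ` N \<subseteq> T"
    proof clarify
      fix P j assume "(P, j) \<in> N"
      then have P: "P \<subseteq> B" and j: "j \<in> B" "j \<notin> sym_diff P (\<rho> (col P) P)"
        by (auto simp: N_def)
      then show "(sym_diff P {j}, col P, j) \<in> T"
        using col[OF P] \<rho>_flip[OF P j(1)] by (auto simp: T_def)
    qed
    show "finite T"
      unfolding T_def using B fin by (intro finite_SigmaI) auto
  qed
  also have "real (card T) \<le> real (card (Pow B)) * ((real k + 1) * \<Delta>)"
    unfolding T_def
  proof (rule real_card_Sigma_le)
    fix Q assume Q: "Q \<in> Pow B"
    then show "finite (SIGMA i:{..k}. sym_diff Q (\<rho> i Q))"
      using fin by (intro finite_SigmaI) auto
    have "real (card (SIGMA i:{..k}. sym_diff Q (\<rho> i Q))) \<le> real (card {..k}) * \<Delta>"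
      using Q fin \<rho>_near by (intro real_card_Sigma_le) auto
    then show "real (card (SIGMA i:{..k}. sym_diff Q (\<rho> i Q))) \<le> (real k + 1) * \<Delta>"
      by (simp add: add.commute)
  qed (use B in simp)
  finally have "real (card B) - \<Delta> \<le> (real k + 1) * \<Delta>"
    using B by (simp add: card_Pow)
  then show ?thesis by (simp add: algebra_simps)
qed

lemma card_le_of_cube_in_cover:
  fixes B :: "'a set" and f :: "'a set \<Rightarrow> 'b" and U :: "nat \<Rightarrow> 'b set"
  assumes B: "finite B"
    and f: "\<And>P. P \<subseteq> B \<Longrightarrow> f P \<in> Sp"
    and d_sym: "\<And>x y. x \<in> Sp \<Longrightarrow> y \<in> Sp \<Longrightarrow> d x y = d y x"
    and d_self: "\<And>x. x \<in> Sp \<Longrightarrow> d x x < r"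
    and f_flip: "\<And>P j. P \<subseteq> B \<Longrightarrow> j \<in> B \<Longrightarrow> d (f P) (f (sym_diff P {j})) < r"
    and f_sep: "\<And>P Q. P \<subseteq> B \<Longrightarrow> Q \<subseteq> B \<Longrightarrow> real (card (sym_diff P Q)) \<le> d (f P) (f Q)"
    and U_sub: "\<forall>i\<le>k. U i \<subseteq> Sp"
    and U_ball: "\<forall>x\<in>Sp. \<exists>i\<le>k. open_ball_in Sp d x r \<subseteq> U i"
    and U_diam: "\<forall>i\<le>k. \<forall>x y. same_r_component (U i) d r x y \<longrightarrow> d x y \<le> \<Delta>"
  shows "real (card B) \<le> (real k + 2) * \<Delta>"
proof -
  define col where "col P = (SOME i. i \<le> k \<and> open_ball_in Sp d (f P) r \<subseteq> U i)" for P
  have col: "col P \<le> k \<and> open_ball_in Sp d (f P) r \<subseteq> U (col P)" if "P \<subseteq> B" for P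
    unfolding col_def by (rule someI_ex) (use U_ball f[OF that] in metis)
  have in_col: "f Q \<in> U (col P)" if "P \<subseteq> B" "Q \<subseteq> B" "d (f P) (f Q) < r" for P Q
    using col[OF that(1)] f[OF that(2)] that(3) by (auto simp: open_ball_in_def)
  define comp where "comp i P Q \<longleftrightarrow> Q \<subseteq> B \<and> same_r_component (U i) d r (f P) (f Q)" for i P Q
  have comp_eq: "comp i P = comp i Q" if "i \<le> k" "comp i P Q" for i P Q
  proof -
    have sym: "d a b = d b a" if "a \<in> U i" "b \<in> U i" for a b
      using that U_sub \<open>i \<le> k\<close> d_sym by blast
    have "same_r_component (U i) d r (f P) (f Q)"
      using that(2) by (simp add: comp_def)
    then have "same_r_component (U i) d r (f P) = same_r_component (U i) d r (f Q)"
      using sym by (rule same_r_component_cong)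
    then show ?thesis by (intro ext) (simp add: comp_def)
  qed
  define \<rho> where "\<rho> i P = (if comp i P P then (SOME Q. comp i P Q) else P)" for i P
  have \<rho>_comp: "comp i P (\<rho> i P)" if "comp i P P" for i P
    using that someI[of "comp i P" P] by (simp add: \<rho>_def)
  have \<Delta>: "0 \<le> \<Delta>"
  proof -
    obtain i where "i \<le> k" "f {} \<in> U i"
      using U_ball f[of "{}"] d_self[OF f[of "{}"]] by (fastforce simp: open_ball_in_def)
    then show ?thesis
      using U_diam f_sep[of "{}" "{}"] same_r_component_refl by fastforce
  qed
  show ?thesis
  proof (rule card_le_of_cube_retractions[where col = col and \<rho> = \<rho>])
    show "finite B" by (rule B)
    show "col P \<le> k" if "P \<subseteq> B" for P using col[OF that] by simp
    show "\<rho> i Q \<subseteq> B" if "i \<le> k" "Q \<subseteq> B" for i Q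
    proof (cases "comp i Q Q")
      case True
      then show ?thesis using \<rho>_comp[OF True] by (simp add: comp_def)
    qed (use that in \<open>simp add: \<rho>_def\<close>)
    show "real (card (sym_diff Q (\<rho> i Q))) \<le> \<Delta>" if "i \<le> k" "Q \<subseteq> B" for i Q
    proof (cases "comp i Q Q")
      case True
      then have "d (f Q) (f (\<rho> i Q)) \<le> \<Delta>"
        using \<rho>_comp that U_diam unfolding comp_def by blast
      then show ?thesis
        using f_sep[OF that(2)] \<rho>_comp[OF True] unfolding comp_def by (meson order_trans)
    qed (simp add: \<rho>_def \<Delta>)
    show "\<rho> (col P) (sym_diff P {j}) = \<rho> (col P) P" if "P \<subseteq> B" "j \<in> B" for P j
    proof -
      have Q: "sym_diff P {j} \<subseteq> B" using that by auto
      have "f P \<in> U (col P)"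
        using in_col[OF that(1) that(1) d_self[OF f[OF that(1)]]] .
      moreover have "f (sym_diff P {j}) \<in> U (col P)"
        using in_col[OF that(1) Q f_flip[OF that]] .
      ultimately have PP: "comp (col P) P P" and PQ: "comp (col P) P (sym_diff P {j})"
        using that(1) Q f_flip[OF that] by (simp_all add: comp_def same_r_component_refl same_r_componentI)
      have "comp (col P) (sym_diff P {j}) = comp (col P) P"
        using comp_eq[OF _ PQ] col[OF that(1)] by simp
      then show ?thesis
        using PP PQ by (simp add: \<rho>_def)
    qed
  qed
qed

definition lit :: "('h, 'c) monoid_scheme \<Rightarrow> ('g, 'd) monoid_scheme \<Rightarrow> 'h \<Rightarrow> 'g set \<Rightarrow> ('g \<Rightarrow> 'h) \<times> 'g" where
  "lit H G c P = ((\<lambda>z. if z \<in> P then c else \<one>\<^bsub>H\<^esub>), \<one>\<^bsub>G\<^esub>)"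

context wreath_word
begin

lemma lit_closed: "finite P \<Longrightarrow> P \<subseteq> carrier G \<Longrightarrow> c \<in> carrier H \<Longrightarrow> lit H G c P \<in> carrier W"
proof -
  assume "finite P" "P \<subseteq> carrier G" "c \<in> carrier H"
  moreover have "lamps H G (lit H G c P) \<subseteq> P" by (auto simp: lamps_def lit_def)
  ultimately show ?thesis
    using finite_subset by (auto simp: lit_def carrier_wreath_iff)
qed

lemma lamp_diff_lit:
  "P \<subseteq> carrier G \<Longrightarrow> Q \<subseteq> carrier G \<Longrightarrow> c \<noteq> \<one>\<^bsub>H\<^esub> \<Longrightarrow>
    lamp_diff H G (lit H G c P) (lit H G c Q) = sym_diff P Q"
  by (auto simp: lamp_diff_def lit_def)

lemma card_sym_diff_le_word_dist:
  assumes "finite P" "P \<subseteq> carrier G" "finite Q" "Q \<subseteq> carrier G" "c \<in> carrier H" "c \<noteq> \<one>\<^bsub>H\<^esub>"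
  shows "real (card (sym_diff P Q)) \<le> word_dist W gw (lit H G c P) (lit H G c Q)"
  using word_dist_wreath_ge(2)[OF lit_closed lit_closed] assms lamp_diff_lit by metis

lemma word_dist_lit_flip:
  assumes "finite P" "P \<subseteq> carrier G" "j \<in> carrier G" "c \<in> carrier H" "c \<noteq> \<one>\<^bsub>H\<^esub>"
  shows "word_dist W gw (lit H G c P) (lit H G c (sym_diff P {j})) \<le> 2 * real (word_len G S j) + 1"
proof -
  have x: "lit H G c P \<in> carrier W" and y: "lit H G c (sym_diff P {j}) \<in> carrier W"
    using assms by (auto intro: lit_closed)
  have "sym_diff P (sym_diff P {j}) = {j}" by auto
  then have "lamp_diff H G (lit H G c P) (lit H G c (sym_diff P {j})) = {j}"
    using assms lamp_diff_lit[of P "sym_diff P {j}" c] by auto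
  moreover have "word_dist G S \<one>\<^bsub>G\<^esub> j = real (word_len G S j)"
    using assms(3) by (simp add: word_dist_def)
  ultimately show ?thesis
    using word_dist_wreath_le[OF x y] by (simp add: lit_def GS.word_dist_self)
qed

lemma growth_le_control_function:
  assumes cf: "control_function (carrier W) (word_dist W gw) k D"
    and t: "0 \<le> t" and c: "c \<in> carrier H" "c \<noteq> \<one>\<^bsub>H\<^esub>"
    and D: "D ((real k + 2) * (t + 1)) = ereal \<Delta>"
  shows "real (growth G S t) \<le> (real k + 2) * \<Delta>"
proof -
  (* r exceeds 2 t + 1, the cost of switching one lamp of the ball of radius t. *)
  define r where "r = (real k + 2) * (t + 1)"
  have "r = real k * t + real k + 2 * t + 2" by (simp add: r_def algebra_simps)
  moreover have "0 \<le> real k * t" using t by simp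
  ultimately have r: "0 < r" "2 * t + 1 < r" using t by linarith+
  obtain U where U_sub: "\<forall>i\<le>k. U i \<subseteq> carrier W"
    and U_ball: "\<forall>x\<in>carrier W. \<exists>i\<le>k. open_ball_in (carrier W) (word_dist W gw) x r \<subseteq> U i"
    and U_diam: "\<forall>i\<le>k. \<forall>x y. same_r_component (U i) (word_dist W gw) r x y
                   \<longrightarrow> ereal (word_dist W gw x y) \<le> D r"
    by (rule control_functionE[OF cf r(1)])
  define B where "B = {g \<in> carrier G. real (word_len G S g) < t}"
  have B: "finite B" "B \<subseteq> carrier G"
    using GS.finite_word_ball[OF finite_gens] by (auto simp: B_def)
  have "real (card B) \<le> (real k + 2) * \<Delta>"
  proof (rule card_le_of_cube_in_cover[where f = "lit H G c" and Sp = "carrier W" and U = U])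
    show "finite B" by (rule B(1))
    show "lit H G c P \<in> carrier W" if "P \<subseteq> B" for P
      using that B c by (meson finite_subset lit_closed order_trans)
    show "word_dist W gw x y = word_dist W gw y x" if "x \<in> carrier W" "y \<in> carrier W" for x y
      using WS.word_dist_commute[OF that] .
    show "word_dist W gw x x < r" if "x \<in> carrier W" for x
      using WS.word_dist_self[OF that] r(1) by simp
    show "word_dist W gw (lit H G c P) (lit H G c (sym_diff P {j})) < r" if "P \<subseteq> B" "j \<in> B" for P j
    proof -
      have "word_dist W gw (lit H G c P) (lit H G c (sym_diff P {j})) \<le> 2 * real (word_len G S j) + 1"
        using that B c by (intro word_dist_lit_flip) (auto intro: finite_subset)
      moreover have "real (word_len G S j) < t" using that(2) by (simp add: B_def)
      ultimately show ?thesis using r(2) by linarith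
    qed
    show "real (card (sym_diff P Q)) \<le> word_dist W gw (lit H G c P) (lit H G c Q)"
      if "P \<subseteq> B" "Q \<subseteq> B" for P Q
      using that B c by (intro card_sym_diff_le_word_dist) (auto intro: finite_subset)
    show "\<forall>i\<le>k. U i \<subseteq> carrier W" by (rule U_sub)
    show "\<forall>x\<in>carrier W. \<exists>i\<le>k. open_ball_in (carrier W) (word_dist W gw) x r \<subseteq> U i" by (rule U_ball)
    show "\<forall>i\<le>k. \<forall>x y. same_r_component (U i) (word_dist W gw) r x y \<longrightarrow> word_dist W gw x y \<le> \<Delta>"
    proof (intro allI impI)
      fix i x y assume "i \<le> k" "same_r_component (U i) (word_dist W gw) r x y"
      then have "ereal (word_dist W gw x y) \<le> D r" by (rule U_diam[rule_format])
      then show "word_dist W gw x y \<le> \<Delta>" using D by (simp add: r_def)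
    qed
  qed
  then show ?thesis by (simp add: growth_def B_def)
qed

lemma control_function_dominates_growth:
  assumes cf: "control_function (carrier W) (word_dist W gw) k D"
    and c: "c \<in> carrier H" "c \<noteq> \<one>\<^bsub>H\<^esub>"
  shows "weakly_dominates D (\<lambda>t. ereal (real (growth G S t)))"
  unfolding weakly_dominates_def
proof (intro exI[of _ "real k + 2"] conjI allI impI)
  fix t :: real assume t: "0 \<le> t"
  have arg: "(real k + 2) * t + (real k + 2) = (real k + 2) * (t + 1)"
    by (simp add: algebra_simps)
  show "ereal (real (growth G S t))
      \<le> ereal (real k + 2) * D ((real k + 2) * t + (real k + 2)) + ereal (real k + 2)"
  proof (cases "D ((real k + 2) * (t + 1))")
    case (real \<Delta>)
    then have "real (growth G S t) \<le> (real k + 2) * \<Delta>"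
      by (rule growth_le_control_function[OF cf t c])
    then show ?thesis using real by (simp add: arg)
  next
    case PInf
    then show ?thesis by (simp add: arg)
  next
    case MInf
    then show ?thesis using control_function_nonneg[OF cf, of "(real k + 2) * (t + 1)"] t by simp
  qed
qed simp_all

end

section \<open>Pulling back covers of the base group\<close>

definition wreath_control_bound :: "('g, 'd) monoid_scheme \<Rightarrow> 'g set \<Rightarrow> (real \<Rightarrow> ereal) \<Rightarrow> real \<Rightarrow> ereal" where
  "wreath_control_bound G S DG =
     (\<lambda>t. (DG t + ereal t) * (case DG t + ereal t of ereal s \<Rightarrow> ereal (real (growth G S s)) | _ \<Rightarrow> \<infinity>))"

lemma wreath_control_bound_PInf: "DG t = \<infinity> \<Longrightarrow> wreath_control_bound G S DG t = \<infinity>"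
  by (simp add: wreath_control_bound_def)

lemma wreath_control_bound_real:
  "DG t = ereal \<Delta> \<Longrightarrow> wreath_control_bound G S DG t = ereal ((\<Delta> + t) * real (growth G S (\<Delta> + t)))"
  by (simp add: wreath_control_bound_def)

lemma wreath_control_bound_nonneg: "0 \<le> DG t \<Longrightarrow> 0 \<le> t \<Longrightarrow> 0 \<le> wreath_control_bound G S DG t"
  by (cases "DG t") (simp_all add: wreath_control_bound_def)

context wreath_word
begin

lemma open_ball_wreath_subset:
  assumes "x \<in> carrier W" "r \<le> R" "open_ball_in (carrier G) (word_dist G S) (snd x) R \<subseteq> V"
  shows "open_ball_in (carrier W) (word_dist W gw) x r \<subseteq> {y \<in> carrier W. snd y \<in> V}"
proof
  fix y assume "y \<in> open_ball_in (carrier W) (word_dist W gw) x r"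
  then have y: "y \<in> carrier W" "word_dist W gw x y < r" by (auto simp: open_ball_in_def)
  moreover have "word_dist G S (snd x) (snd y) < R"
    using word_dist_wreath_ge(1)[OF assms(1) y(1)] y(2) assms(2) by linarith
  ultimately show "y \<in> {y \<in> carrier W. snd y \<in> V}"
    using assms(3) wreath_snd_closed[OF y(1)] by (auto simp: open_ball_in_def)
qed

lemma same_r_component_wreath:
  assumes "same_r_component U (word_dist W gw) r x y" "U \<subseteq> carrier W" "snd ` U \<subseteq> V" "r \<le> R"
  shows "same_r_component V (word_dist G S) R (snd x) (snd y)
    \<and> (\<forall>p\<in>lamp_diff H G x y. \<exists>q. same_r_component V (word_dist G S) R (snd x) q \<and> word_dist G S q p < r)"
proof -
  have x: "x \<in> U" using same_r_component_mem(1)[OF assms(1)] .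
  have "(\<lambda>a b. a \<in> U \<and> b \<in> U \<and> word_dist W gw a b < r)\<^sup>*\<^sup>* x y"
    using assms(1) by (simp add: same_r_component_def)
  then show ?thesis
  proof (induction rule: rtranclp_induct)
    case base
    show ?case using x assms(3) by (auto simp: lamp_diff_def intro: same_r_component_refl)
  next
    case (step y z)
    then have yz: "y \<in> carrier W" "z \<in> carrier W" "snd z \<in> V" "word_dist W gw y z < r"
      using assms(2,3) by auto
    have IH1: "same_r_component V (word_dist G S) R (snd x) (snd y)"
      and IH2: "\<And>p. p \<in> lamp_diff H G x y \<Longrightarrow>
                  \<exists>q. same_r_component V (word_dist G S) R (snd x) q \<and> word_dist G S q p < r"
      using step.IH by auto
    have "word_dist G S (snd y) (snd z) < R"
      using word_dist_wreath_ge(1)[OF yz(1,2)] yz(4) assms(4) by linarith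
    then have "same_r_component V (word_dist G S) R (snd x) (snd z)"
      by (rule same_r_component_step[OF IH1 yz(3)])
    moreover have "\<exists>q. same_r_component V (word_dist G S) R (snd x) q \<and> word_dist G S q p < r"
      if p: "p \<in> lamp_diff H G x z" for p
    proof (cases "p \<in> lamp_diff H G x y")
      case True
      then show ?thesis by (rule IH2)
    next
      case False
      then have "p \<in> lamp_diff H G y z" using p by (auto simp: lamp_diff_def)
      then have "word_dist G S (snd y) p < r"
        using word_dist_wreath_ge(3)[OF yz(1,2)] yz(4) by fastforce
      then show ?thesis using IH1 by blast
    qed
    ultimately show ?case by blast
  qed
qed

lemma same_r_component_wreath_near:
  assumes comp: "same_r_component U (word_dist W gw) r x y"
    and U: "U \<subseteq> carrier W" "snd ` U \<subseteq> V" and V: "V \<subseteq> carrier G" and "r \<le> R"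
    and V_diam: "\<And>a b. same_r_component V (word_dist G S) R a b \<Longrightarrow> word_dist G S a b \<le> \<Delta>"
  shows "word_dist G S (snd x) (snd y) \<le> \<Delta>"
    and "p \<in> lamp_diff H G x y \<Longrightarrow> word_dist G S (snd x) p < \<Delta> + r"
proof -
  note proj = same_r_component_wreath[OF comp U \<open>r \<le> R\<close>]
  show "word_dist G S (snd x) (snd y) \<le> \<Delta>"
    using proj V_diam by blast
  assume p: "p \<in> lamp_diff H G x y"
  then obtain q where q: "same_r_component V (word_dist G S) R (snd x) q" "word_dist G S q p < r"
    using proj by blast
  have "snd x \<in> carrier G" "q \<in> carrier G" "p \<in> carrier G"
    using same_r_component_mem[OF q(1)] V p by (auto simp: lamp_diff_def)
  then show "word_dist G S (snd x) p < \<Delta> + r"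
    using GS.word_dist_triangle[of "snd x" q p] V_diam[OF q(1)] q(2) by linarith
qed

lemma word_dist_wreath_component_le:
  assumes comp: "same_r_component U (word_dist W gw) r x y"
    and U: "U \<subseteq> carrier W" "snd ` U \<subseteq> V" and V: "V \<subseteq> carrier G"
    and r: "0 < r" "r + 1 \<le> R"
    and V_diam: "\<And>a b. same_r_component V (word_dist G S) R a b \<Longrightarrow> word_dist G S a b \<le> \<Delta>"
  shows "word_dist W gw x y \<le> 3 * ((\<Delta> + R) * real (growth G S (\<Delta> + R)))"
proof -
  have "r \<le> R" using r by simp
  note near = same_r_component_wreath_near[OF comp U V this V_diam]
  have xy: "x \<in> carrier W" "y \<in> carrier W"
    using same_r_component_mem[OF comp] U(1) by auto
  have gx: "snd x \<in> V" "snd x \<in> carrier G"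
    using same_r_component_mem(1)[OF comp] U V by auto
  have \<Delta>: "0 \<le> \<Delta>"
    using V_diam[OF same_r_component_refl[OF gx(1)]] GS.word_dist_self[OF gx(2)] by simp
  define \<Gamma> where "\<Gamma> = growth G S (\<Delta> + R)"
  have card: "card (lamp_diff H G x y) \<le> \<Gamma>"
  proof -
    let ?ball = "{p \<in> carrier G. word_dist G S (snd x) p < \<Delta> + R}"
    have bij: "bij_betw (\<lambda>p. inv\<^bsub>G\<^esub> snd x \<otimes>\<^bsub>G\<^esub> p) ?ball {g \<in> carrier G. real (word_len G S g) < \<Delta> + R}"
      by (rule GS.bij_betw_word_dist_ball[OF gx(2)])
    have "lamp_diff H G x y \<subseteq> ?ball"
      using near(2) r by (fastforce simp: lamp_diff_def)
    moreover have "finite ?ball"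
      using bij GS.finite_word_ball[OF finite_gens] by (simp add: bij_betw_finite)
    ultimately show ?thesis
      using bij_betw_same_card[OF bij] card_mono by (fastforce simp: \<Gamma>_def growth_def)
  qed
  have \<Gamma>: "1 \<le> \<Gamma>" using GS.growth_ge_one[OF finite_gens] \<Delta> r by (simp add: \<Gamma>_def)
  have "word_dist W gw x y
      \<le> (\<Sum>p\<in>lamp_diff H G x y. 2 * word_dist G S (snd x) p + 1) + word_dist G S (snd x) (snd y)"
    by (rule word_dist_wreath_le[OF xy])
  also have "\<dots> \<le> real (card (lamp_diff H G x y)) * (2 * (\<Delta> + r) + 1) + \<Delta>"
    using near r by (intro add_mono sum_bounded_above) fastforce+
  also have "\<dots> \<le> real \<Gamma> * (2 * (\<Delta> + R)) + real \<Gamma> * (\<Delta> + R)"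
  proof (rule add_mono)
    show "real (card (lamp_diff H G x y)) * (2 * (\<Delta> + r) + 1) \<le> real \<Gamma> * (2 * (\<Delta> + R))"
      using card \<Delta> r by (intro mult_mono) auto
    have "\<Delta> \<le> 1 * (\<Delta> + R)" using r by simp
    also have "\<dots> \<le> real \<Gamma> * (\<Delta> + R)" using \<Gamma> \<Delta> r by (intro mult_right_mono) auto
    finally show "\<Delta> \<le> real \<Gamma> * (\<Delta> + R)" .
  qed
  finally show ?thesis by (simp add: \<Gamma>_def algebra_simps)
qed

lemma word_dist_wreath_component_le_bound:
  assumes comp: "same_r_component U (word_dist W gw) r x y"
    and U: "U \<subseteq> carrier W" "snd ` U \<subseteq> V" and V: "V \<subseteq> carrier G"
    and r: "0 < r" "r + 1 \<le> R"
    and V_diam: "\<And>a b. same_r_component V (word_dist G S) R a b \<Longrightarrow> ereal (word_dist G S a b) \<le> DG R"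
    and DG: "0 \<le> DG R"
  shows "ereal (word_dist W gw x y) \<le> ereal 3 * wreath_control_bound G S DG R"
proof (cases "DG R")
  case (real \<Delta>)
  have "word_dist W gw x y \<le> 3 * ((\<Delta> + R) * real (growth G S (\<Delta> + R)))"
    by (rule word_dist_wreath_component_le[OF comp U V r]) (use V_diam real in fastforce)
  then show ?thesis
    by (simp add: wreath_control_bound_real[where DG = DG, OF real])
next
  case PInf
  then show ?thesis by (simp add: wreath_control_bound_PInf)
next
  case MInf
  then show ?thesis using DG by simp
qed

lemma control_function_wreath:
  assumes cf: "control_function (carrier G) (word_dist G S) n DG" and nk: "n \<le> k"
  shows "control_function (carrier W) (word_dist W gw) k
           (\<lambda>r. ereal 3 * wreath_control_bound G S DG (3 * r + 1))"
proof (rule control_functionI)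
  show "0 \<le> ereal 3 * wreath_control_bound G S DG (3 * t + 1)" if "0 \<le> t" for t
    using control_function_nonneg[OF cf] that by (simp add: wreath_control_bound_nonneg)
  show "word_dist W gw x x = 0" if "x \<in> carrier W" for x
    using WS.word_dist_self[OF that] .
  fix r :: real assume r: "0 < r"
  (* Any R \<ge> r + 1 would do; this choice gives a bound of the form 3 f (3 r + 1). *)
  define R where "R = 3 * r + 1"
  have R: "0 < R" "r + 1 \<le> R" "r \<le> R" using r by (simp_all add: R_def)
  obtain V where V_sub: "\<forall>i\<le>n. V i \<subseteq> carrier G"
    and V_ball: "\<forall>g\<in>carrier G. \<exists>i\<le>n. open_ball_in (carrier G) (word_dist G S) g R \<subseteq> V i"
    and V_diam: "\<forall>i\<le>n. \<forall>a b. same_r_component (V i) (word_dist G S) R a b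
                   \<longrightarrow> ereal (word_dist G S a b) \<le> DG R"
    by (rule control_functionE[OF cf R(1)])
  define U where "U i = {x \<in> carrier W. i \<le> n \<and> snd x \<in> V i}" for i
  have ball: "\<exists>i\<le>k. open_ball_in (carrier W) (word_dist W gw) x r \<subseteq> U i" if x: "x \<in> carrier W" for x
  proof -
    obtain i where i: "i \<le> n" "open_ball_in (carrier G) (word_dist G S) (snd x) R \<subseteq> V i"
      using V_ball wreath_snd_closed[OF x] by blast
    then have "open_ball_in (carrier W) (word_dist W gw) x r \<subseteq> U i"
      using open_ball_wreath_subset[OF x R(3) i(2)] by (auto simp: U_def)
    with i(1) nk show ?thesis by (intro exI[of _ i]) simp
  qed
  have diam: "ereal (word_dist W gw x y) \<le> ereal 3 * wreath_control_bound G S DG (3 * r + 1)"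
    if comp: "same_r_component (U i) (word_dist W gw) r x y" for i x y
    unfolding R_def[symmetric]
  proof (rule word_dist_wreath_component_le_bound[OF comp _ _ _ r R(2)])
    have i: "i \<le> n" using same_r_component_mem(1)[OF comp] by (simp add: U_def)
    show "U i \<subseteq> carrier W" "snd ` U i \<subseteq> V i" by (auto simp: U_def)
    show "V i \<subseteq> carrier G" using V_sub i by blast
    show "ereal (word_dist G S a b) \<le> DG R" if "same_r_component (V i) (word_dist G S) R a b" for a b
      by (rule V_diam[rule_format, OF i that])
    show "0 \<le> DG R" using control_function_nonneg[OF cf] R by simp
  qed
  show "\<exists>U. (\<forall>i\<le>k. U i \<subseteq> carrier W)
      \<and> (\<forall>x\<in>carrier W. \<exists>i\<le>k. open_ball_in (carrier W) (word_dist W gw) x r \<subseteq> U i)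
      \<and> (\<forall>i\<le>k. \<forall>x y. same_r_component (U i) (word_dist W gw) r x y
           \<longrightarrow> ereal (word_dist W gw x y) \<le> ereal 3 * wreath_control_bound G S DG (3 * r + 1))"
  proof (intro exI[of _ U] conjI allI impI ballI)
    show "U i \<subseteq> carrier W" if "i \<le> k" for i
      by (auto simp: U_def)
    show "\<exists>i\<le>k. open_ball_in (carrier W) (word_dist W gw) x r \<subseteq> U i" if "x \<in> carrier W" for x
      using ball[OF that] .
    show "ereal (word_dist W gw x y) \<le> ereal 3 * wreath_control_bound G S DG (3 * r + 1)"
      if "i \<le> k" "same_r_component (U i) (word_dist W gw) r x y" for i x y
      using diam[OF that(2)] .
  qed
qed

end

theorem theorem4p5:
  fixes G :: "('g, 'd) monoid_scheme" and H :: "('h, 'c) monoid_scheme"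
    and S :: "'g set" and n :: nat and DG :: "real \<Rightarrow> ereal"
  assumes "group G" and "S \<subseteq> carrier G" and "finite S" and "generate G S = carrier G"
    and "infinite (carrier G)"
    and "group H" and "finite (carrier H)" and "carrier H \<noteq> {\<one>\<^bsub>H\<^esub>}"
    and "control_function (carrier G) (word_dist G S) n DG"
  shows "(\<forall>k\<ge>n. \<exists>D. control_function (carrier (wreath H G))
                         (word_dist (wreath H G) (wreath_gens H G S)) k D
                    \<and> weakly_dominates
                        (\<lambda>t. (DG t + ereal t) *
                              (case DG t + ereal t of
                                 ereal s \<Rightarrow> ereal (real (growth G S s))
                               | _ \<Rightarrow> \<infinity>))
                        D)
       \<and> (\<forall>k\<ge>n. \<forall>D. control_function (carrier (wreath H G))
                         (word_dist (wreath H G) (wreath_gens H G S)) k D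
                    \<longrightarrow> weakly_dominates D (\<lambda>t. ereal (real (growth G S t))))"
proof -
  interpret wreath_word G H S
    by (intro wreath_word.intro wreath_groups.intro generated_group.intro group_gens.intro
        group_gens_axioms.intro generated_group_axioms.intro wreath_word_axioms.intro assms)
  obtain c where c: "c \<in> carrier H" "c \<noteq> \<one>\<^bsub>H\<^esub>"
    using assms(8) H.one_closed by blast
  have "control_function (carrier W) (word_dist W gw) k
          (\<lambda>r. ereal 3 * wreath_control_bound G S DG (3 * r + 1))
        \<and> weakly_dominates (wreath_control_bound G S DG)
          (\<lambda>r. ereal 3 * wreath_control_bound G S DG (3 * r + 1))" if "n \<le> k" for k
    using control_function_wreath[OF assms(9) that] weakly_dominates_rescale[of 3 1] by simp
  then show ?thesis
    unfolding wreath_control_bound_def using control_function_dominates_growth[OF _ c] by blast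
qed

end
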